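(* Let $N$ be a prime number, let $\omega=\exp(i\pi k/N)$ with $0<k<2N$ and $\gcd(k,2N)=1$ be a primitive $2N$-th root of unity, and let $L\subset\mathbb{R}^3$ be an oriented link. Then $V_N(L)=U_N^{\nu}\cdot \tilde V_N(L)$, where $\nu$ is the multiplicity of the root of $V_N(L)$ at $q=\omega$, $\tilde V_N(L)\in\mathbb{Z}[q,q^{-1}]$, and $U_N$ does not divide $\tilde V_N(L)$ in $\mathbb{Z}[q,q^{-1}]$.
   Context: For $N\in\mathbb{N}$, $V_N\colon\{\text{oriented links in }\mathbb{R}^3\}/\text{isotopy}\to\mathbb{Z}[q,q^{-1}]$ denotes the unique link invariant with $V_N(\text{unknot})=1$ satisfying the skein relation $q^{-N}V_N(L_+)-q^{N}V_N(L_-)=(q^{-1}-q)V_N(L_0)$, where $L_+,L_-,L_0$ differ only near one point as a positive crossing, a negative crossing and the oriented smoothing. Further $U_N=\frac{q^{-N}-q^{N}}{q^{-1}-q}=q^{-N+1}+q^{-N+3}+\dots+q^{N-1}$ for $N\ge 2$. *)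

theory Defs
  imports Complex_Main "HOL-Library.Poly_Mapping" "HOL-Computational_Algebra.Polynomial"
begin

text \<open>A Laurent polynomial in q with integer coefficients is a finitely supported
  map from exponents (int) to coefficients (int); the convolution product of
  Poly_Mapping makes this the commutative ring Z[q,q^-1].\<close>

type_synonym lpoly = "int \<Rightarrow>\<^sub>0 int"

definition qpow :: "int \<Rightarrow> lpoly" where
  "qpow e = Poly_Mapping.single e 1"

definition U :: "nat \<Rightarrow> lpoly" where
  "U N = (\<Sum>j<N. qpow (2 * int j - int N + 1))"

text \<open>The ordinary complex polynomial q^(-m) f(q), m the lowest exponent of f;
  it has the same nonzero roots with the same multiplicities as f.\<close>
definition lp_to_poly :: "lpoly \<Rightarrow> complex poly" where
  "lp_to_poly f =
     (let m = (if Poly_Mapping.keys f = {} then 0 else Min (Poly_Mapping.keys f));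
          M = (if Poly_Mapping.keys f = {} then 0 else Max (Poly_Mapping.keys f))
      in Poly (map (\<lambda>j. of_int (Poly_Mapping.lookup f (m + int j))) [0..<nat (M - m) + 1]))"

definition root_mult :: "lpoly \<Rightarrow> complex \<Rightarrow> nat" where
  "root_mult f w = order w (lp_to_poly f)"

text \<open>A braid word on n strands: list of generators (i, s), 1 \<le> i < n,
  s = True for sigma_i (positive crossing), s = False for sigma_i^-1.
  By Alexander's theorem every oriented link is the closure of such a braid,
  and by Markov's theorem two closures are isotopic iff the braids are related
  by braid relations, conjugation and (de)stabilization.\<close>

type_synonym braid = "(nat \<times> bool) list"

definition braid_word :: "nat \<Rightarrow> braid \<Rightarrow> bool" where
  "braid_word n w \<longleftrightarrow> (\<forall>(i, s) \<in> set w. 1 \<le> i \<and> i < n)"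

definition is_V :: "nat \<Rightarrow> (nat \<Rightarrow> braid \<Rightarrow> lpoly) \<Rightarrow> bool" where
  "is_V N V \<longleftrightarrow>
     \<comment> \<open>free cancellation sigma_i sigma_i^-1 = 1\<close>
     (\<forall>n u v i s. braid_word n (u @ v) \<and> 1 \<le> i \<and> i < n \<longrightarrow>
        V n (u @ [(i, s), (i, \<not> s)] @ v) = V n (u @ v)) \<and>
     \<comment> \<open>far commutativity\<close>
     (\<forall>n u v i j s t. braid_word n (u @ v) \<and> 1 \<le> i \<and> i < n \<and> 1 \<le> j \<and> j < n
        \<and> i + 2 \<le> j \<longrightarrow>
        V n (u @ [(i, s), (j, t)] @ v) = V n (u @ [(j, t), (i, s)] @ v)) \<and>
     \<comment> \<open>braid relation sigma_i sigma_(i+1) sigma_i = sigma_(i+1) sigma_i sigma_(i+1)\<close>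
     (\<forall>n u v i. braid_word n (u @ v) \<and> 1 \<le> i \<and> i + 1 < n \<longrightarrow>
        V n (u @ [(i, True), (i + 1, True), (i, True)] @ v) =
        V n (u @ [(i + 1, True), (i, True), (i + 1, True)] @ v)) \<and>
     \<comment> \<open>conjugation (cyclic rotation of the word)\<close>
     (\<forall>n u v. braid_word n (u @ v) \<longrightarrow> V n (u @ v) = V n (v @ u)) \<and>
     \<comment> \<open>Markov stabilisation, both signs\<close>
     (\<forall>n w s. 1 \<le> n \<and> braid_word n w \<longrightarrow> V (n + 1) (w @ [(n, s)]) = V n w) \<and>
     \<comment> \<open>normalisation: the unknot is the closure of the trivial 1-strand braid\<close>
     V 1 [] = 1 \<and>
     \<comment> \<open>skein relation at a crossing\<close>
     (\<forall>n u v i. braid_word n (u @ v) \<and> 1 \<le> i \<and> i < n \<longrightarrow>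
        qpow (- int N) * V n (u @ [(i, True)] @ v)
        - qpow (int N) * V n (u @ [(i, False)] @ v)
        = (qpow (-1) - qpow 1) * V n (u @ v))"

end

theory Submission
  imports Defs "HOL-Computational_Algebra.Polynomial_Factorial"
    "HOL-Computational_Algebra.Field_as_Ring"
begin

text \<open>Every property of Laurent polynomials that passes along the skein relation from any two of
  \<open>V(L\<^sub>+), V(L\<^sub>-), V(L\<^sub>0)\<close> to the third and is preserved by multiplication with \<open>U\<^sub>N\<close> holds for
  all \<open>V(L)\<close>: braid relations bring a positive braid word into a form where either a generator
  is squared or the top generator occurs at most once, and then the skein relation, a
  destabilisation or the removal of an unlinked strand shortens it. In this way \<open>V(L) \<noteq> 0\<close>
  (at \<open>q = 1\<close> it takes a positive value), and for odd \<open>N\<close> only even powers of \<open>q\<close> occur.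

  Write \<open>V(L) = q\<^sup>m P(q)\<close> with \<open>P \<in> \<int>[q]\<close>. The roots of \<open>U\<^sub>N\<close> are the \<open>2N\<close>-th roots of unity
  other than \<open>\<plusminus>1\<close>. Since the cyclotomic polynomial of prime index is irreducible (Eisenstein),
  an integer polynomial vanishing at one nontrivial \<open>N\<close>-th root of unity vanishes at all of
  them, and by differentiation all these roots have the same order in \<open>P\<close>. For odd \<open>N\<close>, the
  roots of \<open>U\<^sub>N\<close> are \<open>\<plusminus>\<zeta>\<close> with \<open>\<zeta>\<^sup>N = -1\<close> and \<open>P\<close> is even; for \<open>N = 2\<close> they are \<open>\<plusminus>\<i>\<close>, exchanged by
  complex conjugation. So all roots of \<open>U\<^sub>N\<close> have the same order \<open>\<nu>\<close> as \<open>\<omega>\<close>, whence \<open>U\<^sub>N\<^sup>\<nu>\<close>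
  divides \<open>V(L)\<close> and the cofactor does not vanish at \<open>\<omega>\<close>.\<close>

section \<open>Laurent polynomials\<close>

lemma qpow_mult: "qpow a * qpow b = qpow (a + b)"
  by (simp add: qpow_def mult_single)

lemma qpow_0 [simp]: "qpow 0 = 1"
  by (simp add: qpow_def)

lemma qpow_neq_0: "qpow a \<noteq> 0"
  by (simp add: qpow_def)

lemma qpow_power: "qpow a ^ n = qpow (int n * a)"
  by (induction n) (auto simp: qpow_mult algebra_simps)

lemma lookup_single_mult:
  fixes f :: lpoly
  shows "Poly_Mapping.lookup (Poly_Mapping.single a c * f) e = c * Poly_Mapping.lookup f (e - a)"
proof -
  have "(\<lambda>b. c * Poly_Mapping.lookup f b when e = a + b) = (\<lambda>b. c * Poly_Mapping.lookup f b when b = e - a)"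
    by (auto simp: fun_eq_iff when_def)
  moreover have "Poly_Mapping.lookup (Poly_Mapping.single a c * f) e =
      Sum_any (\<lambda>b. c * Poly_Mapping.lookup f b when e = a + b)"
    by (simp add: lookup_mult lookup_single when_mult mult_when Sum_any_right_distrib)
  ultimately show ?thesis by (simp only:) simp
qed

lemma lookup_qpow_mult:
  fixes f :: lpoly
  shows "Poly_Mapping.lookup (qpow a * f) e = Poly_Mapping.lookup f (e - a)"
  by (simp add: qpow_def lookup_single_mult)

lemma map_poly_of_int_add:
  "map_poly (of_int :: int \<Rightarrow> 'a::comm_ring_1) (P + Q) = map_poly of_int P + map_poly of_int Q"
  by (rule poly_eqI) (simp add: coeff_map_poly)

lemma map_poly_of_int_diff:
  "map_poly (of_int :: int \<Rightarrow> 'a::comm_ring_1) (P - Q) = map_poly of_int P - map_poly of_int Q"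
  by (rule poly_eqI) (simp add: coeff_map_poly)

lemma map_poly_of_int_mult:
  "map_poly (of_int :: int \<Rightarrow> 'a::comm_ring_1) (P * Q) = map_poly of_int P * map_poly of_int Q"
  by (rule poly_eqI) (simp add: coeff_map_poly coeff_mult of_int_sum)

lemma map_poly_of_int_power:
  "map_poly (of_int :: int \<Rightarrow> 'a::comm_ring_1) (P ^ n) = map_poly of_int P ^ n"
  by (induction n) (simp_all add: map_poly_of_int_mult)

lemma map_poly_of_int_sum:
  "map_poly (of_int :: int \<Rightarrow> 'a::comm_ring_1) (sum f A) = (\<Sum>j\<in>A. map_poly of_int (f j))"
  by (induction A rule: infinite_finite_induct) (auto simp: map_poly_of_int_add)

abbreviation cpoly :: "int poly \<Rightarrow> complex poly" where
  "cpoly \<equiv> map_poly of_int"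

definition lpoly_of_poly :: "int poly \<Rightarrow> lpoly" where
  "lpoly_of_poly P = poly (map_poly of_int P) (qpow 1)"

lemma lookup_lpoly_of_poly: "Poly_Mapping.lookup (lpoly_of_poly P) e = (if 0 \<le> e then coeff P (nat e) else 0)"
proof (induction P arbitrary: e)
  case 0
  then show ?case by (simp add: lpoly_of_poly_def)
next
  case (pCons a P)
  have "lpoly_of_poly (pCons a P) = of_int a + qpow 1 * lpoly_of_poly P"
    by (simp add: lpoly_of_poly_def map_poly_pCons)
  with pCons show ?case
    by (cases "e = 0")
       (auto simp: lookup_qpow_mult lookup_of_int lookup_add coeff_pCons nat_diff_distrib split: nat.split)
qed

lemma lpoly_of_poly_inject: "lpoly_of_poly P = lpoly_of_poly Q \<longleftrightarrow> P = Q"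
proof
  assume eq: "lpoly_of_poly P = lpoly_of_poly Q"
  show "P = Q"
  proof (rule poly_eqI)
    fix n
    have "Poly_Mapping.lookup (lpoly_of_poly P) (int n) = Poly_Mapping.lookup (lpoly_of_poly Q) (int n)"
      using eq by simp
    then show "coeff P n = coeff Q n" by (simp add: lookup_lpoly_of_poly)
  qed
qed simp

lemma lpoly_of_poly_0 [simp]: "lpoly_of_poly 0 = 0"
  by (simp add: lpoly_of_poly_def)

lemma lpoly_of_poly_1 [simp]: "lpoly_of_poly 1 = 1"
  by (simp add: lpoly_of_poly_def)

lemma lpoly_of_poly_eq_0_iff: "lpoly_of_poly P = 0 \<longleftrightarrow> P = 0"
  using lpoly_of_poly_inject[of P 0] by simp

lemma lpoly_of_poly_add: "lpoly_of_poly (P + Q) = lpoly_of_poly P + lpoly_of_poly Q"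
  by (simp add: lpoly_of_poly_def map_poly_of_int_add)

lemma lpoly_of_poly_diff: "lpoly_of_poly (P - Q) = lpoly_of_poly P - lpoly_of_poly Q"
  by (simp add: lpoly_of_poly_def map_poly_of_int_diff)

lemma lpoly_of_poly_uminus: "lpoly_of_poly (- P) = - lpoly_of_poly P"
  using lpoly_of_poly_diff[of 0 P] by simp

lemma lpoly_of_poly_mult: "lpoly_of_poly (P * Q) = lpoly_of_poly P * lpoly_of_poly Q"
  by (simp add: lpoly_of_poly_def map_poly_of_int_mult)

lemma lpoly_of_poly_power: "lpoly_of_poly (P ^ n) = lpoly_of_poly P ^ n"
  by (simp add: lpoly_of_poly_def map_poly_of_int_power)

lemma lpoly_of_poly_sum: "lpoly_of_poly (sum f A) = (\<Sum>j\<in>A. lpoly_of_poly (f j))"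
  by (simp add: lpoly_of_poly_def map_poly_of_int_sum poly_sum)

lemma lpoly_of_poly_monom: "lpoly_of_poly (monom 1 k) = qpow (int k)"
  by (rule poly_mapping_eqI)
     (auto simp: lookup_lpoly_of_poly coeff_monom qpow_def lookup_single when_def)

lemma lp_to_poly_normal_form:
  fixes f :: lpoly
  assumes "f \<noteq> 0"
  defines "m \<equiv> Min (Poly_Mapping.keys f)"
  obtains P where "lp_to_poly f = cpoly P" and "f = qpow m * lpoly_of_poly P"
    and "coeff P 0 \<noteq> 0"
proof -
  have keys: "Poly_Mapping.keys f \<noteq> {}" using assms by simp
  define M where "M = Max (Poly_Mapping.keys f)"
  define L where "L = nat (M - m) + 1"
  define P where "P = Poly (map (\<lambda>j. Poly_Mapping.lookup f (m + int j)) [0..<L])"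
  have outside: "Poly_Mapping.lookup f e = 0" if "e < m \<or> M < e" for e
  proof (rule ccontr)
    assume "Poly_Mapping.lookup f e \<noteq> 0"
    then have "e \<in> Poly_Mapping.keys f" by (simp add: in_keys_iff)
    then show False using that unfolding m_def M_def by (meson Max_ge Min_le finite_keys leD)
  qed
  have coeff_P: "coeff P j = Poly_Mapping.lookup f (m + int j)" for j
  proof (cases "j < L")
    case False
    then have "M < m + int j" unfolding L_def by linarith
    then show ?thesis using outside False by (simp add: P_def nth_default_def)
  qed (simp add: P_def nth_default_def)
  have "lp_to_poly f = Poly (map (\<lambda>j. of_int (Poly_Mapping.lookup f (m + int j))) [0..<L])"
    unfolding lp_to_poly_def Let_def L_def m_def M_def using keys by simp
  then have "lp_to_poly f = cpoly P"
    by (intro poly_eqI) (simp add: coeff_map_poly coeff_P nth_default_def P_def)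
  moreover have "f = qpow m * lpoly_of_poly P"
  proof (rule poly_mapping_eqI)
    fix e
    show "Poly_Mapping.lookup f e = Poly_Mapping.lookup (qpow m * lpoly_of_poly P) e"
      using outside[of e] by (cases "m \<le> e") (simp_all add: lookup_qpow_mult lookup_lpoly_of_poly coeff_P)
  qed
  moreover have "coeff P 0 \<noteq> 0"
    using keys coeff_P[of 0] unfolding m_def by (simp add: in_keys_iff[symmetric])
  ultimately show ?thesis using that by blast
qed

lemma lpoly_poly_repr: obtains m P where "f = qpow m * lpoly_of_poly P"
  by (cases "f = 0") (metis lpoly_of_poly_0 mult_zero_right, metis lp_to_poly_normal_form)

definition U_poly :: "nat \<Rightarrow> int poly" where
  "U_poly N = (\<Sum>j<N. monom 1 (2 * j))"

lemma U_eq_U_poly: "U N = qpow (1 - int N) * lpoly_of_poly (U_poly N)"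
  unfolding U_def U_poly_def lpoly_of_poly_sum sum_distrib_left
  by (rule sum.cong) (auto simp: lpoly_of_poly_monom qpow_mult intro!: arg_cong[where f = qpow])

lemma poly_U_poly_1: "poly (U_poly N) 1 = int N"
  unfolding U_poly_def by (simp add: poly_sum poly_monom)

lemma add_qpow_mult_lpoly_of_poly:
  "qpow m1 * lpoly_of_poly P1 + qpow m2 * lpoly_of_poly P2 =
   qpow (min m1 m2) * lpoly_of_poly (monom 1 (nat (m1 - min m1 m2)) * P1 + monom 1 (nat (m2 - min m1 m2)) * P2)"
proof -
  define m where "m = min m1 m2"
  have "qpow m1 = qpow m * lpoly_of_poly (monom 1 (nat (m1 - m)))"
    "qpow m2 = qpow m * lpoly_of_poly (monom 1 (nat (m2 - m)))"
    by (simp_all add: lpoly_of_poly_monom qpow_mult m_def)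
  then show ?thesis
    unfolding m_def[symmetric] by (simp add: lpoly_of_poly_add lpoly_of_poly_mult algebra_simps)
qed

lemma U_power_mult:
  "U N ^ \<nu> * (qpow (e + int \<nu> * (int N - 1)) * lpoly_of_poly R) = qpow e * lpoly_of_poly (U_poly N ^ \<nu> * R)"
proof -
  have "U N ^ \<nu> * (qpow (e + int \<nu> * (int N - 1)) * lpoly_of_poly R) =
      (qpow (int \<nu> * (1 - int N)) * qpow (e + int \<nu> * (int N - 1))) * lpoly_of_poly (U_poly N ^ \<nu> * R)"
    unfolding U_eq_U_poly by (simp add: power_mult_distrib qpow_power lpoly_of_poly_power lpoly_of_poly_mult ac_simps)
  also have "qpow (int \<nu> * (1 - int N)) * qpow (e + int \<nu> * (int N - 1)) = qpow e"
    by (simp add: qpow_mult algebra_simps)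
  finally show ?thesis .
qed

lemma qpow_mult_lpoly_of_poly_eq:
  assumes "qpow e1 * lpoly_of_poly A = qpow e2 * lpoly_of_poly B"
  shows "(\<exists>s. monom 1 s * A = B) \<or> (\<exists>s. A = monom 1 s * B)"
proof (cases "e2 \<le> e1")
  case True
  have "qpow (- e2) * (qpow e1 * lpoly_of_poly A) = qpow (- e2) * (qpow e2 * lpoly_of_poly B)"
    using assms by simp
  then have "lpoly_of_poly (monom 1 (nat (e1 - e2)) * A) = lpoly_of_poly B"
    using True by (simp add: mult.assoc[symmetric] qpow_mult lpoly_of_poly_mult lpoly_of_poly_monom)
  then show ?thesis unfolding lpoly_of_poly_inject by blast
next
  case False
  have "qpow (- e1) * (qpow e1 * lpoly_of_poly A) = qpow (- e1) * (qpow e2 * lpoly_of_poly B)"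
    using assms by simp
  then have "lpoly_of_poly A = lpoly_of_poly (monom 1 (nat (e2 - e1)) * B)"
    using False by (simp add: mult.assoc[symmetric] qpow_mult lpoly_of_poly_mult lpoly_of_poly_monom)
  then show ?thesis unfolding lpoly_of_poly_inject by blast
qed

section \<open>Positive braid words up to braid relations\<close>

inductive braid_move :: "nat list \<Rightarrow> nat list \<Rightarrow> bool" where
  commute: "i + 2 \<le> j \<Longrightarrow> braid_move (u @ [i, j] @ v) (u @ [j, i] @ v)"
| commute': "i + 2 \<le> j \<Longrightarrow> braid_move (u @ [j, i] @ v) (u @ [i, j] @ v)"
| braid: "braid_move (u @ [i, i + 1, i] @ v) (u @ [i + 1, i, i + 1] @ v)"
| braid': "braid_move (u @ [i + 1, i, i + 1] @ v) (u @ [i, i + 1, i] @ v)"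

abbreviation braid_moves :: "nat list \<Rightarrow> nat list \<Rightarrow> bool" where
  "braid_moves \<equiv> braid_move\<^sup>*\<^sup>*"

lemma braid_move_append: "braid_move x y \<Longrightarrow> braid_move (a @ x @ b) (a @ y @ b)"
proof (induction rule: braid_move.induct)
  case (commute i j u v) then show ?case using braid_move.commute[of i j "a @ u" "v @ b"] by simp
next
  case (commute' i j u v) then show ?case using braid_move.commute'[of i j "a @ u" "v @ b"] by simp
next
  case (braid u i v) then show ?case using braid_move.braid[of "a @ u" i "v @ b"] by simp
next
  case (braid' u i v) then show ?case using braid_move.braid'[of "a @ u" i "v @ b"] by simp
qed

lemma braid_moves_append: "braid_moves x y \<Longrightarrow> braid_moves (a @ x @ b) (a @ y @ b)"
  by (induction rule: rtranclp_induct) (auto intro: rtranclp.rtrancl_into_rtrancl braid_move_append)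

lemma braid_move_set: "braid_move x y \<Longrightarrow> set y = set x"
  by (induction rule: braid_move.induct) auto

lemma braid_moves_set: "braid_moves x y \<Longrightarrow> set y = set x"
  by (induction rule: rtranclp_induct) (auto dest: braid_move_set)

lemma braid_move_length: "braid_move x y \<Longrightarrow> length y = length x"
  by (induction rule: braid_move.induct) auto

lemma braid_moves_length: "braid_moves x y \<Longrightarrow> length y = length x"
  by (induction rule: rtranclp_induct) (auto dest: braid_move_length)

lemma braid_moves_commute_right:
  assumes "\<forall>i\<in>set y. i + 2 \<le> c"
  shows "braid_moves (c # y) (y @ [c])"
  using assms
proof (induction y)
  case (Cons i y)
  have "braid_move ([] @ [c, i] @ y) ([] @ [i, c] @ y)" using Cons.prems by (intro braid_move.commute') simp
  moreover have "braid_moves ([i] @ (c # y) @ []) ([i] @ (y @ [c]) @ [])"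
    using Cons by (intro braid_moves_append) auto
  ultimately show ?case by (simp add: converse_rtranclp_into_rtranclp)
qed simp

lemma braid_moves_commute_left:
  assumes "\<forall>i\<in>set y. i + 2 \<le> c"
  shows "braid_moves (y @ [c]) (c # y)"
  using assms
proof (induction y rule: rev_induct)
  case (snoc i y)
  have "braid_moves ([] @ (y @ [c]) @ [i]) ([] @ (c # y) @ [i])"
    using snoc by (intro braid_moves_append) auto
  moreover have "braid_move ((y @ [i, c] @ [])) (y @ [c, i] @ [])"
    using snoc.prems by (intro braid_move.commute) simp
  ultimately show ?case by (simp add: rtranclp.rtrancl_into_rtrancl)
qed simp

definition has_square :: "nat list \<Rightarrow> bool" where
  "has_square y \<longleftrightarrow> (\<exists>u v i. y = u @ [i, i] @ v)"

lemma has_square_append: "has_square y \<Longrightarrow> has_square (a @ y @ b)"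
  unfolding has_square_def by (metis append.assoc)

lemma split_two_occurrences:
  assumes "2 \<le> count_list x c"
  obtains a y b where "x = a @ [c] @ y @ [c] @ b" and "c \<notin> set y"
proof -
  obtain k where "count_list x c = Suc (Suc k)" using assms by (metis add_2_eq_Suc le_Suc_ex)
  then obtain a r where x: "x = a @ c # r" and "count_list r c = Suc k"
    by (metis count_list_Suc_split_first)
  then obtain y b where "r = y @ c # b" and "c \<notin> set y"
    by (metis count_list_Suc_split_first)
  with x that show ?thesis by simp
qed

lemma subset_below_top:
  fixes A :: "nat set"
  assumes "A \<subseteq> {1..<n}" "n - 1 \<notin> A"
  shows "A \<subseteq> {1..<n - 1}"
proof
  fix i assume "i \<in> A"
  with assms have "1 \<le> i" "i < n" "i \<noteq> n - 1" by auto
  then show "i \<in> {1..<n - 1}" by simp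
qed

lemma far_from_top:
  fixes y :: "nat list"
  assumes "set y \<subseteq> {1..<c}" "c - 1 \<notin> set y"
  shows "\<forall>i\<in>set y. i + 2 \<le> c"
  using subset_below_top[OF assms] by fastforce

text \<open>The two outer letters \<open>c\<close> are moved towards each other; the only obstacle is a single
  \<open>c - 1\<close>, which is removed by the braid relation \<open>c (c-1) c = (c-1) c (c-1)\<close>.\<close>
lemma braid_moves_sandwich:
  assumes y: "set y \<subseteq> {1..<c}" and top: "count_list y (c - 1) \<le> 1"
  shows "\<exists>z. braid_moves (c # y @ [c]) z \<and> (has_square z \<or> count_list z c = 1)"
proof (cases "count_list y (c - 1) = 0")
  case True
  then have "\<forall>i\<in>set y. i + 2 \<le> c" using far_from_top[OF y] by (simp add: count_list_0_iff)
  from braid_moves_append[OF braid_moves_commute_right[OF this], of "[]" "[c]"]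
  have "braid_moves (c # y @ [c]) (y @ [c, c] @ [])" by simp
  moreover have "has_square (y @ [c, c] @ [])" unfolding has_square_def by blast
  ultimately show ?thesis by blast
next
  case False
  then have "count_list y (c - 1) = Suc 0" using top by simp
  then obtain y1 y2 where y12: "y = y1 @ (c - 1) # y2" "c - 1 \<notin> set y1" "count_list y2 (c - 1) = 0"
    by (metis count_list_Suc_split_first)
  have c2: "2 \<le> c" using y y12(1) by fastforce
  have far1: "\<forall>i\<in>set y1. i + 2 \<le> c" using y y12(1,2) by (intro far_from_top) auto
  have far2: "\<forall>i\<in>set y2. i + 2 \<le> c" using y y12(1,3) by (intro far_from_top) (auto simp: count_list_0_iff)
  define z where "z = y1 @ [c - 1, c, c - 1] @ y2"
  have "braid_moves (c # y @ [c]) (y1 @ [c, c - 1] @ y2 @ [c])"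
    using braid_moves_append[OF braid_moves_commute_right[OF far1], of "[]" "[c - 1] @ y2 @ [c]"] y12
    by simp
  also have "braid_moves \<dots> (y1 @ [c, c - 1, c] @ y2)"
    using braid_moves_append[OF braid_moves_commute_left[OF far2], of "y1 @ [c, c - 1]" "[]"] by simp
  also have "braid_move \<dots> z"
    using braid_move.braid'[of y1 "c - 1" y2] c2 by (simp add: z_def)
  finally have "braid_moves (c # y @ [c]) z" .
  moreover have "count_list z c = 1"
  proof -
    have "c \<notin> set y1" "c \<notin> set y2" using y y12(1) by auto
    then show ?thesis using c2 by (simp add: z_def)
  qed
  ultimately show ?thesis by blast
qed

lemma braid_moves_decrease_top:
  assumes below: "\<And>y. set y \<subseteq> {1..<c} \<Longrightarrow> \<exists>y'. braid_moves y y' \<and> (has_square y' \<or> count_list y' (c - 1) \<le> 1)"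
    and x: "set x \<subseteq> {1..<Suc c}" and two: "2 \<le> count_list x c"
  shows "\<exists>x'. braid_moves x x' \<and> (has_square x' \<or> count_list x' c < count_list x c)"
proof -
  obtain a y b where x_eq: "x = a @ [c] @ y @ [c] @ b" and "c \<notin> set y"
    using two by (rule split_two_occurrences)
  have "set y \<subseteq> {1..<c}"
    using x \<open>c \<notin> set y\<close> unfolding x_eq by (auto simp: less_Suc_eq)
  then obtain y' where yy': "braid_moves y y'" and y': "has_square y' \<or> count_list y' (c - 1) \<le> 1"
    using below by blast
  have sy': "set y' \<subseteq> {1..<c}" using braid_moves_set[OF yy'] \<open>set y \<subseteq> {1..<c}\<close> by simp
  have xy': "braid_moves x (a @ (c # y' @ [c]) @ b)"
    using braid_moves_append[OF yy', of "a @ [c]" "[c] @ b"] x_eq by simp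
  show ?thesis
  proof (cases "has_square y'")
    case True
    then show ?thesis using xy' has_square_append[of y' "a @ [c]" "[c] @ b"] by auto
  next
    case False
    then obtain z where yz: "braid_moves (c # y' @ [c]) z" and z: "has_square z \<or> count_list z c = 1"
      using braid_moves_sandwich[OF sy'] y' by blast
    have "braid_moves x (a @ z @ b)"
      using xy' braid_moves_append[OF yz, of a b] by simp
    moreover have "has_square (a @ z @ b) \<or> count_list (a @ z @ b) c < count_list x c"
      using z has_square_append[of z a b] \<open>c \<notin> set y\<close> unfolding x_eq by auto
    ultimately show ?thesis by blast
  qed
qed

text \<open>This is what makes the skein induction terminate: a square is removed by the skein relation,
  a single top generator by destabilisation, and an absent one by dropping a strand.\<close>
lemma braid_moves_square_or_simple_top:
  "set x \<subseteq> {1..<m} \<Longrightarrow> \<exists>y. braid_moves x y \<and> (has_square y \<or> count_list y (m - 1) \<le> 1)"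
proof (induction m arbitrary: x)
  case (Suc c)
  show ?case using Suc.prems
  proof (induction "count_list x c" arbitrary: x rule: less_induct)
    case less
    show ?case
    proof (cases "count_list x c \<le> 1")
      case False
      then obtain x' where xx': "braid_moves x x'" and x': "has_square x' \<or> count_list x' c < count_list x c"
        using braid_moves_decrease_top[OF Suc.IH less.prems] by auto
      have "set x' \<subseteq> {1..<Suc c}" using braid_moves_set[OF xx'] less.prems by simp
      show ?thesis
      proof (cases "has_square x'")
        case False
        then obtain y where "braid_moves x' y" "has_square y \<or> count_list y c \<le> 1"
          using less.hyps[of x'] x' \<open>set x' \<subseteq> {1..<Suc c}\<close> by auto
        then show ?thesis using rtranclp_trans[OF xx'] by auto
      qed (use xx' in auto)
    qed auto
  qed
qed auto

section \<open>Induction along the skein relation\<close>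

definition positive_braid :: "nat list \<Rightarrow> braid" where
  "positive_braid xs = map (\<lambda>i. (i, True)) xs"

lemma positive_braid_simps [simp]:
  "positive_braid [] = []"
  "positive_braid (x # xs) = (x, True) # positive_braid xs"
  "positive_braid (xs @ ys) = positive_braid xs @ positive_braid ys"
  "length (positive_braid xs) = length xs"
  by (simp_all add: positive_braid_def)

lemma braid_word_Nil [simp]: "braid_word n []"
  by (simp add: braid_word_def)

lemma braid_word_Cons [simp]: "braid_word n (x # w) \<longleftrightarrow> 1 \<le> fst x \<and> fst x < n \<and> braid_word n w"
  by (cases x) (auto simp: braid_word_def)

lemma braid_word_append [simp]: "braid_word n (u @ v) \<longleftrightarrow> braid_word n u \<and> braid_word n v"
  by (auto simp: braid_word_def)

lemma braid_word_positive_braid [simp]: "braid_word n (positive_braid xs) \<longleftrightarrow> set xs \<subseteq> {1..<n}"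
  by (induction xs) auto

lemma braid_word_iff_set: "braid_word n w \<longleftrightarrow> set (map fst w) \<subseteq> {1..<n}"
  by (induction w) auto

locale skein_closed =
  fixes P :: "nat \<Rightarrow> braid \<Rightarrow> bool"
  assumes cancel: "\<And>n u v i s. braid_word n (u @ v) \<Longrightarrow> 1 \<le> i \<Longrightarrow> i < n \<Longrightarrow> P n (u @ v) \<Longrightarrow>
        P n (u @ [(i, s), (i, \<not> s)] @ v)"
    and far_commute: "\<And>n u v i j s t. braid_word n (u @ v) \<Longrightarrow> 1 \<le> i \<Longrightarrow> i < n \<Longrightarrow> 1 \<le> j \<Longrightarrow> j < n
        \<Longrightarrow> i + 2 \<le> j \<Longrightarrow> P n (u @ [(i, s), (j, t)] @ v) = P n (u @ [(j, t), (i, s)] @ v)"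
    and braid_relation: "\<And>n u v i. braid_word n (u @ v) \<Longrightarrow> 1 \<le> i \<Longrightarrow> i + 1 < n \<Longrightarrow>
        P n (u @ [(i, True), (i + 1, True), (i, True)] @ v) =
        P n (u @ [(i + 1, True), (i, True), (i + 1, True)] @ v)"
    and rotate: "\<And>n u v. braid_word n (u @ v) \<Longrightarrow> P n (u @ v) = P n (v @ u)"
    and stabilise: "\<And>n w s. 1 \<le> n \<Longrightarrow> braid_word n w \<Longrightarrow> P n w \<Longrightarrow> P (n + 1) (w @ [(n, s)])"
    and unknot: "P 1 []"
    and skein: "\<And>n u v i s. braid_word n (u @ v) \<Longrightarrow> 1 \<le> i \<Longrightarrow> i < n \<Longrightarrow> P n (u @ v) \<Longrightarrow>
        P n (u @ [(i, s)] @ v) \<Longrightarrow> P n (u @ [(i, \<not> s)] @ v)"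
    and add_strand: "\<And>n w. 1 \<le> n \<Longrightarrow> braid_word n w \<Longrightarrow> P n w \<Longrightarrow> P (Suc n) w"
begin

lemma braid_moves_iff:
  assumes "braid_moves x y" "set x \<subseteq> {1..<n}"
  shows "P n (positive_braid x) = P n (positive_braid y)"
  using assms
proof (induction rule: rtranclp_induct)
  case (step y z)
  then have "set y \<subseteq> {1..<n}" using braid_moves_set by blast
  with \<open>braid_move y z\<close> have "P n (positive_braid y) = P n (positive_braid z)"
  proof (induction rule: braid_move.induct)
    case (commute i j u v)
    then show ?case using far_commute[of n "positive_braid u" "positive_braid v" i j True True] by simp
  next
    case (commute' i j u v)
    then show ?case using far_commute[of n "positive_braid u" "positive_braid v" i j True True] by simp
  next
    case (braid u i v)
    then show ?case using braid_relation[of n "positive_braid u" "positive_braid v" i] by simp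
  next
    case (braid' u i v)
    then show ?case using braid_relation[of n "positive_braid u" "positive_braid v" i] by simp
  qed
  with step show ?case by simp
qed simp

text \<open>By the skein relation, the signs of the crossings may be changed at the cost of
  braids with fewer crossings.\<close>
lemma from_positive_signs:
  assumes shorter: "\<And>w'. length w' < length (u @ r) \<Longrightarrow> braid_word n w' \<Longrightarrow> P n w'"
    and "braid_word n (u @ r)" and "P n (u @ positive_braid (map fst r))"
  shows "P n (u @ r)"
  using assms
proof (induction r arbitrary: u)
  case (Cons x r)
  obtain i s where x: "x = (i, s)" by (cases x)
  have pos: "P n ((u @ [(i, True)]) @ r)"
    using Cons.IH[of "u @ [(i, True)]"] Cons.prems x by simp
  show ?case
  proof (cases s)
    case False
    have "P n (u @ r)" using Cons.prems x by (intro Cons.prems(1)) auto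
    then show ?thesis using skein[of n u r i True] pos Cons.prems x False by simp
  qed (use pos x in simp)
qed simp

lemma holds_if_square:
  assumes shorter: "\<And>w. length w < length (u @ [i, i] @ v) \<Longrightarrow> braid_word n w \<Longrightarrow> P n w"
    and set: "set (u @ [i, i] @ v) \<subseteq> {1..<n}"
  shows "P n (positive_braid (u @ [i, i] @ v))"
proof -
  let ?u = "positive_braid u" and ?v = "positive_braid v"
  have i: "1 \<le> i" "i < n" using set by auto
  have "P n (?u @ ?v)" using shorter[of "?u @ ?v"] set by simp
  then have "P n ((?u @ [(i, True)]) @ [(i, False)] @ ?v)"
    using cancel[of n ?u ?v i True] i set by simp
  moreover have "P n ((?u @ [(i, True)]) @ ?v)"
    using shorter[of "(?u @ [(i, True)]) @ ?v"] set by simp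
  ultimately have "P n ((?u @ [(i, True)]) @ [(i, \<not> False)] @ ?v)"
    using skein[of n "?u @ [(i, True)]" ?v i False] i set by simp
  then show ?thesis by simp
qed

lemma holds_if_single_top:
  assumes smaller: "\<And>w. length w < length (y1 @ (n - 1) # y2) \<Longrightarrow> braid_word (n - 1) w \<Longrightarrow> P (n - 1) w"
    and "2 \<le> n" and set: "set (y1 @ (n - 1) # y2) \<subseteq> {1..<n}" and "n - 1 \<notin> set (y1 @ y2)"
  shows "P n (positive_braid (y1 @ (n - 1) # y2))"
proof -
  let ?w = "positive_braid (y2 @ y1)"
  have "set (y2 @ y1) \<subseteq> {1..<n - 1}"
    using set \<open>n - 1 \<notin> set (y1 @ y2)\<close> by (intro subset_below_top) auto
  then have "P (n - 1 + 1) (?w @ [(n - 1, True)])"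
    using stabilise[of "n - 1" ?w True] smaller[of ?w] \<open>2 \<le> n\<close> by simp
  then have "P n (positive_braid y2 @ positive_braid y1 @ [(n - 1, True)])"
    using \<open>2 \<le> n\<close> by simp
  then show ?thesis
    using rotate[of n "positive_braid y2" "positive_braid y1 @ [(n - 1, True)]"] set by simp
qed

lemma holds_for_positive_braid:
  assumes smaller: "\<And>m w. length w + m < length x + n \<Longrightarrow> 1 \<le> m \<Longrightarrow> braid_word m w \<Longrightarrow> P m w"
    and "2 \<le> n" and x: "set x \<subseteq> {1..<n}"
  shows "P n (positive_braid x)"
proof -
  obtain y where xy: "braid_moves x y" and y: "has_square y \<or> count_list y (n - 1) \<le> 1"
    using braid_moves_square_or_simple_top[OF x] by blast
  have sy: "set y \<subseteq> {1..<n}" and ly: "length y = length x"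
    using braid_moves_set[OF xy] braid_moves_length[OF xy] x by simp_all
  consider (square) u v i where "y = u @ [i, i] @ v" | (absent) "count_list y (n - 1) = 0"
    | (single) "count_list y (n - 1) = Suc 0"
    using y unfolding has_square_def by force
  then have "P n (positive_braid y)"
  proof cases
    case square
    then show ?thesis using holds_if_square smaller[of _ n] ly sy \<open>2 \<le> n\<close> by simp
  next
    case absent
    then have "set y \<subseteq> {1..<n - 1}" using subset_below_top[OF sy] by (simp add: count_list_0_iff)
    then show ?thesis
      using smaller[of "positive_braid y" "n - 1"] add_strand[of "n - 1"] ly \<open>2 \<le> n\<close> by simp
  next
    case single
    then obtain y1 y2 where y12: "y = y1 @ (n - 1) # y2" "n - 1 \<notin> set y1" "count_list y2 (n - 1) = 0"
      by (metis count_list_Suc_split_first)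
    then show ?thesis
      using holds_if_single_top[of y1 n y2] smaller[of _ "n - 1"] ly sy \<open>2 \<le> n\<close>
      by (simp add: count_list_0_iff)
  qed
  then show ?thesis using braid_moves_iff[OF xy x] by simp
qed

theorem holds: "1 \<le> n \<Longrightarrow> braid_word n w \<Longrightarrow> P n w"
proof (induction "length w + n" arbitrary: w n rule: less_induct)
  case less
  show ?case
  proof (cases "n = 1")
    case True
    then have "w = []" using less.prems by (cases w) auto
    then show ?thesis using True unknot by simp
  next
    case False
    have "P n ([] @ positive_braid (map fst w))"
      using holds_for_positive_braid[of "map fst w" n] less False braid_word_iff_set[of n w] by simp
    then show ?thesis using from_positive_signs[of "[]" w n] less by simp
  qed
qed

end

abbreviation skein_z :: lpoly where
  "skein_z \<equiv> qpow (-1) - qpow 1"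

lemma skein_z_neq_0: "skein_z \<noteq> 0"
proof
  assume "skein_z = 0"
  then have "Poly_Mapping.lookup skein_z (-1) = 0" by simp
  then show False by (simp add: qpow_def lookup_minus lookup_single)
qed

lemma skein_z_mult_U: "skein_z * U N = qpow (- int N) - qpow (int N)"
proof -
  have "skein_z * U N = (\<Sum>j<N. qpow (2 * int j - int N) - qpow (2 * int (Suc j) - int N))"
    unfolding U_def sum_distrib_left
    by (rule sum.cong) (auto simp: algebra_simps qpow_mult)
  also have "\<dots> = qpow (- int N) - qpow (int N)"
    by (subst sum_lessThan_telescope'[where f = "\<lambda>j. qpow (2 * int j - int N)"]) simp
  finally show ?thesis .
qed

lemma skein_solve:
  assumes "qpow (- int N) * a - qpow (int N) * b = skein_z * c"
  shows "a = qpow (2 * int N) * b + qpow (int N) * skein_z * c"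
    and "b = qpow (- 2 * int N) * a - qpow (- int N) * skein_z * c"
proof -
  have "qpow (- int N) * a = qpow (int N) * b + skein_z * c"
    using assms by (simp add: algebra_simps)
  then have "qpow (int N) * (qpow (- int N) * a) = qpow (int N) * (qpow (int N) * b + skein_z * c)"
    by simp
  then show "a = qpow (2 * int N) * b + qpow (int N) * skein_z * c"
    by (simp add: distrib_left mult.assoc[symmetric] qpow_mult)
  have "qpow (int N) * b = qpow (- int N) * a - skein_z * c"
    using assms by (simp add: algebra_simps)
  then have "qpow (- int N) * (qpow (int N) * b) = qpow (- int N) * (qpow (- int N) * a - skein_z * c)"
    by simp
  then show "b = qpow (- 2 * int N) * a - qpow (- int N) * skein_z * c"
    by (simp add: right_diff_distrib mult.assoc[symmetric] qpow_mult)
qed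

context
  fixes N :: nat and V :: "nat \<Rightarrow> braid \<Rightarrow> lpoly"
  assumes V: "is_V N V"
begin

lemma V_cancel: "braid_word n (u @ v) \<Longrightarrow> 1 \<le> i \<Longrightarrow> i < n \<Longrightarrow>
    V n (u @ [(i, s), (i, \<not> s)] @ v) = V n (u @ v)"
  using V unfolding is_V_def by meson

lemma V_far_commute: "braid_word n (u @ v) \<Longrightarrow> 1 \<le> i \<Longrightarrow> i < n \<Longrightarrow> 1 \<le> j \<Longrightarrow> j < n \<Longrightarrow>
    i + 2 \<le> j \<Longrightarrow> V n (u @ [(i, s), (j, t)] @ v) = V n (u @ [(j, t), (i, s)] @ v)"
  using V unfolding is_V_def by meson

lemma V_braid_relation: "braid_word n (u @ v) \<Longrightarrow> 1 \<le> i \<Longrightarrow> i + 1 < n \<Longrightarrow>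
    V n (u @ [(i, True), (i + 1, True), (i, True)] @ v) =
    V n (u @ [(i + 1, True), (i, True), (i + 1, True)] @ v)"
  using V unfolding is_V_def by meson

lemma V_rotate: "braid_word n (u @ v) \<Longrightarrow> V n (u @ v) = V n (v @ u)"
  using V unfolding is_V_def by meson

lemma V_stabilise: "1 \<le> n \<Longrightarrow> braid_word n w \<Longrightarrow> V (n + 1) (w @ [(n, s)]) = V n w"
  using V unfolding is_V_def by meson

lemma V_unknot: "V 1 [] = 1"
  using V unfolding is_V_def by meson

lemma V_skein: "braid_word n (u @ v) \<Longrightarrow> 1 \<le> i \<Longrightarrow> i < n \<Longrightarrow>
    qpow (- int N) * V n (u @ [(i, True)] @ v) - qpow (int N) * V n (u @ [(i, False)] @ v) =
    skein_z * V n (u @ v)"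
  using V unfolding is_V_def by meson

text \<open>The skein relation at a crossing \<open>\<sigma>\<^sub>n\<close> of a stabilised braid relates the two
  stabilisations (both with value \<open>V n w\<close>) to the split union with an unknot.\<close>
lemma V_add_strand:
  assumes "1 \<le> n" "braid_word n w"
  shows "V (Suc n) w = U N * V n w"
proof -
  have "qpow (- int N) * V (n + 1) (w @ [(n, True)] @ []) - qpow (int N) * V (n + 1) (w @ [(n, False)] @ [])
        = skein_z * V (n + 1) (w @ [])"
    by (rule V_skein) (use assms in \<open>auto simp: braid_word_def\<close>)
  then have "(qpow (- int N) - qpow (int N)) * V n w = skein_z * V (Suc n) w"
    using V_stabilise[OF assms, of True] V_stabilise[OF assms, of False] by (simp add: algebra_simps)
  then have "skein_z * (U N * V n w) = skein_z * V (Suc n) w"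
    by (simp add: skein_z_mult_U mult.assoc[symmetric])
  then show ?thesis using skein_z_neq_0 by simp
qed

text \<open>Solving the skein relation for \<open>V(L\<^sub>+)\<close> resp. \<open>V(L\<^sub>-)\<close> gives the two closure conditions.\<close>
lemma V_induct:
  fixes Q :: "lpoly \<Rightarrow> bool"
  assumes "Q 1"
    and positive: "\<And>b c. Q b \<Longrightarrow> Q c \<Longrightarrow> Q (qpow (2 * int N) * b + qpow (int N) * skein_z * c)"
    and negative: "\<And>a c. Q a \<Longrightarrow> Q c \<Longrightarrow> Q (qpow (- 2 * int N) * a - qpow (- int N) * skein_z * c)"
    and U: "\<And>f. Q f \<Longrightarrow> Q (U N * f)"
    and "1 \<le> n" "braid_word n w"
  shows "Q (V n w)"
proof -
  interpret skein_closed "\<lambda>n w. Q (V n w)"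
  proof
    fix n u v i j s t
    assume "braid_word n (u @ v)" "1 \<le> i" "i < n" "1 \<le> j" "j < n" "i + 2 \<le> j"
    then show "Q (V n (u @ [(i, s), (j, t)] @ v)) = Q (V n (u @ [(j, t), (i, s)] @ v))"
      by (metis V_far_commute)
  next
    fix n u v i s
    assume uv: "braid_word n (u @ v)" and i: "1 \<le> i" "i < n"
      and Q0: "Q (V n (u @ v))" and Qs: "Q (V n (u @ [(i, s)] @ v))"
    note sk = V_skein[OF uv i]
    show "Q (V n (u @ [(i, \<not> s)] @ v))"
    proof (cases s)
      case True
      then have "Q (qpow (- 2 * int N) * V n (u @ [(i, True)] @ v) - qpow (- int N) * skein_z * V n (u @ v))"
        using negative Qs Q0 by simp
      then show ?thesis using skein_solve(2)[OF sk] True by simp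
    next
      case False
      then have "Q (qpow (2 * int N) * V n (u @ [(i, False)] @ v) + qpow (int N) * skein_z * V n (u @ v))"
        using positive Qs Q0 by simp
      then show ?thesis using skein_solve(1)[OF sk] False by simp
    qed
  qed (use V_cancel V_braid_relation V_rotate V_stabilise V_unknot V_add_strand
         \<open>Q 1\<close> U in simp_all)
  show ?thesis using holds \<open>1 \<le> n\<close> \<open>braid_word n w\<close> .
qed

end

section \<open>Evaluation at \<open>q = 1\<close> and parity of exponents\<close>

definition value_at_one :: "lpoly \<Rightarrow> int \<Rightarrow> bool" where
  "value_at_one f c \<longleftrightarrow> (\<exists>m P. f = qpow m * lpoly_of_poly P \<and> poly P 1 = c)"

lemma value_at_one_exists: "\<exists>c. value_at_one f c"
  using lpoly_poly_repr[of f] unfolding value_at_one_def by metis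

lemma value_at_one_neq_0: "value_at_one f c \<Longrightarrow> c \<noteq> 0 \<Longrightarrow> f \<noteq> 0"
  unfolding value_at_one_def using qpow_neq_0 lpoly_of_poly_eq_0_iff by fastforce

lemma value_at_one_add: "value_at_one f a \<Longrightarrow> value_at_one g b \<Longrightarrow> value_at_one (f + g) (a + b)"
proof -
  assume "value_at_one f a" "value_at_one g b"
  then obtain m1 P1 m2 P2 where "f = qpow m1 * lpoly_of_poly P1" "poly P1 1 = a"
    "g = qpow m2 * lpoly_of_poly P2" "poly P2 1 = b"
    unfolding value_at_one_def by blast
  then have "f + g = qpow (min m1 m2) * lpoly_of_poly
      (monom 1 (nat (m1 - min m1 m2)) * P1 + monom 1 (nat (m2 - min m1 m2)) * P2)"
    "poly (monom 1 (nat (m1 - min m1 m2)) * P1 + monom 1 (nat (m2 - min m1 m2)) * P2) 1 = a + b"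
    by (simp_all add: add_qpow_mult_lpoly_of_poly poly_monom)
  then show ?thesis unfolding value_at_one_def by blast
qed

lemma value_at_one_mult: "value_at_one f a \<Longrightarrow> value_at_one g b \<Longrightarrow> value_at_one (f * g) (a * b)"
proof -
  assume "value_at_one f a" "value_at_one g b"
  then obtain m1 P1 m2 P2 where "f = qpow m1 * lpoly_of_poly P1" "poly P1 1 = a"
    "g = qpow m2 * lpoly_of_poly P2" "poly P2 1 = b"
    unfolding value_at_one_def by blast
  then have "f * g = qpow (m1 + m2) * lpoly_of_poly (P1 * P2)" "poly (P1 * P2) 1 = a * b"
    by (simp_all add: lpoly_of_poly_mult qpow_mult[symmetric] ac_simps)
  then show ?thesis unfolding value_at_one_def by blast
qed

lemma value_at_one_uminus: "value_at_one f a \<Longrightarrow> value_at_one (- f) (- a)"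
  unfolding value_at_one_def by (metis lpoly_of_poly_uminus mult_minus_right poly_minus)

lemma value_at_one_qpow: "value_at_one (qpow e) 1"
  unfolding value_at_one_def by (rule exI[of _ e], rule exI[of _ 1]) (simp add: lpoly_of_poly_def)

lemma value_at_one_skein_z: "value_at_one skein_z 0"
proof -
  have "skein_z = qpow (-1) * lpoly_of_poly (1 - monom 1 2)"
    by (simp add: lpoly_of_poly_diff lpoly_of_poly_monom qpow_mult algebra_simps)
  then show ?thesis unfolding value_at_one_def by (force simp: poly_monom)
qed

lemma value_at_one_U: "value_at_one (U N) (int N)"
  unfolding value_at_one_def U_eq_U_poly using poly_U_poly_1 by blast

text \<open>At \<open>q = 1\<close> the skein relation says \<open>V(L\<^sub>+) = V(L\<^sub>-)\<close>, so every \<open>V(L)\<close> takes a power of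
  \<open>N\<close> as its value there.\<close>
lemma V_neq_0:
  assumes "is_V N V" "0 < N" "1 \<le> n" "braid_word n w"
  shows "V n w \<noteq> 0"
proof -
  let ?Q = "\<lambda>f. \<exists>c > 0. value_at_one f c"
  have skein_term: "value_at_one (qpow e * skein_z * c) 0" for e c
    using value_at_one_mult[OF value_at_one_mult[OF value_at_one_qpow value_at_one_skein_z]]
      value_at_one_exists[of c] by fastforce
  have "?Q (V n w)"
  proof (rule V_induct[OF assms(1) _ _ _ _ assms(3,4)])
    have "value_at_one 1 1" using value_at_one_qpow[of 0] by simp
    then show "?Q 1" by (intro exI[of _ 1]) simp
    show "?Q (qpow (2 * int N) * b + qpow (int N) * skein_z * c)" if "?Q b" for b c
      using that value_at_one_add[OF value_at_one_mult[OF value_at_one_qpow] skein_term] by fastforce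
    show "?Q (qpow (- 2 * int N) * a - qpow (- int N) * skein_z * c)" if "?Q a" for a c
      using that value_at_one_add[OF value_at_one_mult[OF value_at_one_qpow]
          value_at_one_uminus[OF skein_term]] by fastforce
    show "?Q (U N * f)" if Qf: "?Q f" for f
    proof -
      obtain c where "c > 0" "value_at_one f c" using Qf by blast
      then show ?thesis
        using value_at_one_mult[OF value_at_one_U, of f c N] assms(2)
        by (intro exI[of _ "int N * c"]) simp
    qed
  qed
  then show ?thesis using value_at_one_neq_0 by fastforce
qed

definition exponents_parity :: "bool \<Rightarrow> lpoly \<Rightarrow> bool" where
  "exponents_parity b f \<longleftrightarrow> (\<forall>e\<in>Poly_Mapping.keys f. even e = b)"

lemma exponents_parity_0: "exponents_parity b 0"
  unfolding exponents_parity_def by simp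

lemma exponents_parity_add: "exponents_parity b f \<Longrightarrow> exponents_parity b g \<Longrightarrow> exponents_parity b (f + g)"
  using keys_add[of f g] unfolding exponents_parity_def by blast

lemma exponents_parity_diff: "exponents_parity b f \<Longrightarrow> exponents_parity b g \<Longrightarrow> exponents_parity b (f - g)"
  using exponents_parity_add[of b f "- g"] unfolding exponents_parity_def by simp

lemma exponents_parity_mult:
  assumes "exponents_parity b f" "exponents_parity c g"
  shows "exponents_parity (b = c) (f * g)"
  unfolding exponents_parity_def
proof
  fix e assume "e \<in> Poly_Mapping.keys (f * g)"
  then obtain x y where "e = x + y" "x \<in> Poly_Mapping.keys f" "y \<in> Poly_Mapping.keys g"
    using keys_mult[of f g] by blast
  then show "even e = (b = c)" using assms unfolding exponents_parity_def by auto
qed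

lemma exponents_parity_qpow: "exponents_parity (even e) (qpow e)"
  unfolding exponents_parity_def qpow_def by simp

lemma exponents_parity_sum:
  "(\<And>j. j \<in> A \<Longrightarrow> exponents_parity b (f j)) \<Longrightarrow> exponents_parity b (sum f A)"
  by (induction A rule: infinite_finite_induct) (auto simp: exponents_parity_0 exponents_parity_add)

lemma exponents_parity_U:
  assumes "odd N"
  shows "exponents_parity True (U N)"
  unfolding U_def
proof (rule exponents_parity_sum)
  fix j
  have "even (2 * int j - int N + 1)" using assms by simp
  then show "exponents_parity True (qpow (2 * int j - int N + 1))"
    using exponents_parity_qpow[of "2 * int j - int N + 1"] by simp
qed

lemma even_exponent_if_exponents_parity:
  assumes "exponents_parity b (qpow m * lpoly_of_poly P)" "coeff P 0 \<noteq> 0" "coeff P j \<noteq> 0"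
  shows "even j"
proof -
  have "m \<in> Poly_Mapping.keys (qpow m * lpoly_of_poly P)" "m + int j \<in> Poly_Mapping.keys (qpow m * lpoly_of_poly P)"
    using assms(2,3) by (simp_all add: in_keys_iff lookup_qpow_mult lookup_lpoly_of_poly)
  then have "even m = b" "even (m + int j) = b" using assms(1) unfolding exponents_parity_def by blast+
  then show ?thesis by (cases b) auto
qed

lemma V_even_exponents:
  assumes "is_V N V" "odd N" "1 \<le> n" "braid_word n w"
  shows "exponents_parity True (V n w)"
proof -
  have "exponents_parity False (qpow (-1))" "exponents_parity False (qpow 1)"
    using exponents_parity_qpow[of "-1"] exponents_parity_qpow[of 1] by simp_all
  then have skein_z: "exponents_parity False skein_z" by (rule exponents_parity_diff)
  have odd_shift: "exponents_parity True (qpow e * skein_z * c)"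
    if "odd e" "exponents_parity True c" for e c
    using exponents_parity_mult[OF exponents_parity_mult[OF exponents_parity_qpow skein_z] that(2), of e]
      that(1) by simp
  have even_shift: "exponents_parity True (qpow e * a)" if "even e" "exponents_parity True a" for e a
    using exponents_parity_mult[OF exponents_parity_qpow that(2), of e] that(1) by simp
  show ?thesis
  proof (rule V_induct[OF assms(1) _ _ _ _ assms(3,4)])
    show "exponents_parity True 1"
      using exponents_parity_qpow[of 0] by simp
    show "exponents_parity True (qpow (2 * int N) * b + qpow (int N) * skein_z * c)"
      if "exponents_parity True b" "exponents_parity True c" for b c
      using exponents_parity_add[OF even_shift odd_shift] that assms(2) by simp
    show "exponents_parity True (qpow (- 2 * int N) * a - qpow (- int N) * skein_z * c)"
      if "exponents_parity True a" "exponents_parity True c" for a c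
      using exponents_parity_diff[OF even_shift odd_shift] that assms(2) by simp
    show "exponents_parity True (U N * f)" if "exponents_parity True f" for f
      using exponents_parity_mult[OF exponents_parity_U that] assms(2) by simp
  qed
qed

section \<open>Roots of unity of prime order as roots of integer polynomials\<close>

lemma coeff_cpoly [simp]: "coeff (cpoly P) j = of_int (coeff P j)"
  by (simp add: coeff_map_poly)

lemma cpoly_eq_0_iff [simp]: "cpoly P = 0 \<longleftrightarrow> P = 0"
  by (simp add: map_poly_eq_0_iff poly_eq_iff)

lemma degree_cpoly [simp]: "degree (cpoly P) = degree P"
  by (simp add: degree_map_poly)

lemma cpoly_pCons: "cpoly (pCons a P) = pCons (of_int a) (cpoly P)"
  by (simp add: map_poly_pCons)

lemma cpoly_pderiv: "cpoly (pderiv P) = pderiv (cpoly P)"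
  by (rule poly_eqI) (simp add: coeff_pderiv)

lemma cpoly_pcompose: "cpoly (pcompose P Q) = pcompose (cpoly P) (cpoly Q)"
  by (induction P) (simp_all add: pcompose_pCons map_poly_of_int_add map_poly_of_int_mult cpoly_pCons
      of_int_poly[symmetric] map_poly_pCons)

lemma poly_cpoly_smult: "poly (cpoly (smult c P)) x = of_int c * poly (cpoly P) x"
  by (simp add: map_poly_smult)

lemma poly_cpoly_mult: "poly (cpoly (P * Q)) x = poly (cpoly P) x * poly (cpoly Q) x"
  by (simp add: map_poly_of_int_mult)

lemma degree_neq_0_if_root:
  assumes "r \<noteq> 0" "poly (cpoly r) z = 0"
  shows "degree r \<noteq> 0"
proof
  assume "degree r = 0"
  then obtain c where "cpoly r = [:c:]" using degree0_coeffs[of "cpoly r"] by auto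
  then show False using assms by auto
qed

text \<open>Orders of roots are determined by which integer polynomials vanish there, because
  differentiation lowers all orders by one.\<close>
lemma order_eq_if_same_int_roots:
  assumes roots: "\<And>g. poly (cpoly g) a = 0 \<longleftrightarrow> poly (cpoly g) b = 0"
  shows "order a (cpoly P) = order b (cpoly P)"
proof (induction "degree P" arbitrary: P rule: less_induct)
  case less
  show ?case
  proof (cases "P = 0 \<or> poly (cpoly P) a \<noteq> 0")
    case True
    then show ?thesis
    proof
      assume "poly (cpoly P) a \<noteq> 0"
      then show ?thesis using roots order_0I by metis
    qed (simp add: order_def)
  next
    case False
    then have nz: "cpoly P \<noteq> 0" and ra: "poly (cpoly P) a = 0" and rb: "poly (cpoly P) b = 0"
      using roots by auto
    then have "degree (pderiv P) < degree P"
      using degree_neq_0_if_root[of P a] by (simp add: degree_pderiv)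
    then have "order a (cpoly (pderiv P)) = order b (cpoly (pderiv P))" by (rule less)
    then show ?thesis using order_pderiv[OF nz ra] order_pderiv[OF nz rb] cpoly_pderiv by simp
  qed
qed

lemma pcompose_power: "pcompose (q ^ n) r = pcompose q r ^ n"
  by (induction n) (simp_all add: pcompose_mult pcompose_1)

lemma order_le_order_uminus_if_even:
  fixes p :: "'a::idom poly"
  assumes even: "pcompose p [:0, -1:] = p"
  shows "order a p \<le> order (-a) p"
proof (cases "p = 0")
  case False
  obtain r where r: "p = [:-a, 1:] ^ order a p * r" using order_1 by blast
  have "p = pcompose ([:-a, 1:] ^ order a p) [:0, -1:] * pcompose r [:0, -1:]"
    using even r pcompose_mult by metis
  also have "pcompose ([:-a, 1:] ^ order a p) [:0, -1:] = smult ((-1) ^ order a p) ([:- (-a), 1:] ^ order a p)"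
    by (simp add: pcompose_power pcompose_pCons smult_power[symmetric])
  finally have "p = [:- (-a), 1:] ^ order a p * smult ((-1) ^ order a p) (pcompose r [:0, -1:])"
    by (simp add: mult_smult_left mult_smult_right)
  then have "[:- (-a), 1:] ^ order a p dvd p" by (metis dvd_triv_left)
  then show ?thesis using order_divides False by blast
qed (simp add: order_def)

lemma order_uminus_eq_if_even:
  fixes p :: "'a::idom poly"
  assumes "pcompose p [:0, -1:] = p"
  shows "order (-a) p = order a p"
  using order_le_order_uminus_if_even[OF assms, of a] order_le_order_uminus_if_even[OF assms, of "-a"] by simp

lemma pcompose_reflect_if_even_coeffs:
  fixes p :: "'a::comm_ring_1 poly"
  assumes "\<And>j. coeff p j \<noteq> 0 \<Longrightarrow> even j"
  shows "pcompose p [:0, -1:] = p"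
proof (rule poly_eqI)
  fix j
  have "coeff (pcompose p [:0, -1:]) j = (-1) ^ j * coeff p j"
    by (induction p arbitrary: j) (auto simp: pcompose_pCons coeff_pCons split: nat.split)
  then show "coeff (pcompose p [:0, -1:]) j = coeff p j"
    using assms[of j] by (cases "coeff p j = 0") auto
qed

lemma eisenstein_constant_factor:
  fixes A B :: "int poly" and p :: int
  assumes p: "prime p"
    and lower: "\<And>j. j < degree (A * B) \<Longrightarrow> p dvd coeff (A * B) j"
    and const: "\<not> p^2 dvd coeff (A * B) 0"
    and lead: "\<not> p dvd lead_coeff (A * B)"
    and A0: "p dvd coeff A 0"
  shows "degree B = 0"
proof (rule ccontr)
  assume dB: "degree B \<noteq> 0"
  have B0: "\<not> p dvd coeff B 0"
  proof
    assume "p dvd coeff B 0"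
    then have "p * p dvd coeff A 0 * coeff B 0" using A0 by (simp add: mult_dvd_mono)
    then show False using const by (simp add: coeff_mult_0 power2_eq_square)
  qed
  have lead_A: "\<not> p dvd lead_coeff A" using lead by (metis dvd_mult2 lead_coeff_mult)
  define k where "k = (LEAST k. \<not> p dvd coeff A k)"
  have k: "\<not> p dvd coeff A k" "\<And>i. i < k \<Longrightarrow> p dvd coeff A i" "k \<le> degree A"
    unfolding k_def
    using LeastI[of "\<lambda>k. \<not> p dvd coeff A k", OF lead_A] not_less_Least
      Least_le[of "\<lambda>k. \<not> p dvd coeff A k", OF lead_A] by blast+
  have "A \<noteq> 0" "B \<noteq> 0" using k(1) dB by auto
  then have "k < degree (A * B)" using k(3) dB degree_mult_eq by fastforce
  then have "p dvd coeff (A * B) k" by (rule lower)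
  moreover have "coeff (A * B) k = (\<Sum>i<k. coeff A i * coeff B (k - i)) + coeff A k * coeff B 0"
    by (simp add: coeff_mult lessThan_Suc_atMost[symmetric])
  moreover have "p dvd (\<Sum>i<k. coeff A i * coeff B (k - i))" by (rule dvd_sum) (use k(2) in auto)
  ultimately have "p dvd coeff A k * coeff B 0" by (metis dvd_add_right_iff)
  then show False using p k(1) B0 by (simp add: prime_dvd_mult_iff)
qed

lemma eisenstein_criterion:
  fixes A B :: "int poly" and p :: int
  assumes p: "prime p"
    and lower: "\<And>j. j < degree (A * B) \<Longrightarrow> p dvd coeff (A * B) j"
    and const: "\<not> p^2 dvd coeff (A * B) 0"
    and lead: "\<not> p dvd lead_coeff (A * B)"
  shows "degree A = 0 \<or> degree B = 0"
proof (rule ccontr)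
  assume "\<not> (degree A = 0 \<or> degree B = 0)"
  then have "A \<noteq> 0" "B \<noteq> 0" "degree A \<noteq> 0" by auto
  then have "p dvd coeff (A * B) 0" by (intro lower) (simp add: degree_mult_eq)
  then have "p dvd coeff A 0 \<or> p dvd coeff B 0" using p by (simp add: coeff_mult_0 prime_dvd_mult_iff)
  moreover have "degree B = 0" if "p dvd coeff A 0"
    using eisenstein_constant_factor[OF p lower const lead that] .
  moreover have "degree A = 0" if "p dvd coeff B 0"
    using eisenstein_constant_factor[of p B A] p lower const lead that by (simp add: mult.commute)
  ultimately show False using \<open>\<not> (degree A = 0 \<or> degree B = 0)\<close> by blast
qed

definition geom_poly :: "nat \<Rightarrow> int poly" where
  "geom_poly p = (\<Sum>j<p. monom 1 j)"

lemma coeff_geom_poly: "coeff (geom_poly p) j = (if j < p then 1 else 0)"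
  unfolding geom_poly_def by (simp add: coeff_sum coeff_monom)

lemma geom_poly_neq_0: "0 < p \<Longrightarrow> geom_poly p \<noteq> 0"
  by (metis coeff_0 coeff_geom_poly zero_neq_one)

lemma degree_geom_poly: "0 < p \<Longrightarrow> degree (geom_poly p) = p - 1"
  by (intro antisym degree_le le_degree) (auto simp: coeff_geom_poly)

lemma content_geom_poly: "0 < p \<Longrightarrow> content (geom_poly p) = 1"
proof -
  assume "0 < p"
  then have "content (geom_poly p) dvd 1"
    using content_dvd_coeff[of "geom_poly p" 0] by (simp add: coeff_geom_poly)
  then show ?thesis using normalize_content[of "geom_poly p"] by (simp add: zdvd1_eq)
qed

lemma geom_poly_mult_linear: "geom_poly p * [:-1, 1:] = monom 1 p - 1"
proof -
  have "[:-1, 1:] = monom (1::int) 1 - 1" by (simp add: monom_Suc monom_0 one_pCons)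
  then have "geom_poly p * [:-1, 1:] = (\<Sum>j<p. monom 1 (Suc j) - monom 1 j)"
    unfolding geom_poly_def sum_distrib_right by (simp add: right_diff_distrib mult_monom)
  also have "\<dots> = monom 1 p - 1" by (subst sum_lessThan_telescope) (simp add: monom_0 one_pCons)
  finally show ?thesis .
qed

lemma poly_geom_poly_root_of_unity:
  fixes z :: complex
  assumes "z ^ p = 1" "z \<noteq> 1"
  shows "poly (cpoly (geom_poly p)) z = 0"
proof -
  have "poly (cpoly (geom_poly p * [:-1, 1:])) z = poly (cpoly (monom 1 p - 1)) z"
    by (simp only: geom_poly_mult_linear)
  then have "poly (cpoly (geom_poly p)) z * (z - 1) = z ^ p - 1"
    by (simp add: poly_cpoly_mult map_poly_of_int_diff map_poly_monom poly_monom cpoly_pCons algebra_simps)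
  then show ?thesis using assms by simp
qed

lemma coeff_geom_poly_shift: "coeff (pcompose (geom_poly p) [:1, 1:]) j = int (p choose Suc j)"
proof -
  have "pcompose [:-1, 1:] [:1, 1:] = [:0, 1::int:]" by (simp add: pcompose_pCons)
  then have "pcompose (geom_poly p) [:1, 1:] * [:0, 1:] = pcompose (geom_poly p * [:-1, 1:]) [:1, 1:]"
    by (simp only: pcompose_mult)
  also have "\<dots> = [:1, 1:] ^ p - 1"
  proof -
    have "pcompose (monom 1 p) [:1, 1:] = [:1, 1::int:] ^ p"
      by (simp add: monom_altdef pcompose_power pcompose_pCons)
    then show ?thesis by (simp only: geom_poly_mult_linear pcompose_diff pcompose_1)
  qed
  finally have shifted: "pcompose (geom_poly p) [:1, 1:] * [:0, 1:] = [:1, 1:] ^ p - 1" .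
  have "coeff (pcompose (geom_poly p) [:1, 1:]) j = coeff (pcompose (geom_poly p) [:1, 1:] * [:0, 1:]) (Suc j)"
    by simp
  also have "\<dots> = coeff ([:1, 1:] ^ p) (Suc j)" unfolding shifted by (simp add: coeff_diff)
  also have "\<dots> = int (p choose Suc j)"
    by (cases "Suc j \<le> p") (auto simp: coeff_linear_poly_power coeff_eq_0 degree_linear_power)
  finally show ?thesis .
qed

text \<open>Eisenstein's criterion at \<open>p\<close> applies to \<open>geom_poly p (x + 1) = \<Sum>j<p. (p choose (j+1)) x\<^sup>j\<close>.\<close>
lemma geom_poly_shift_factor_const:
  fixes A B :: "int poly"
  assumes p: "prime p" and AB: "A * B = smult e (pcompose (geom_poly p) [:1, 1:])" and e: "\<bar>e\<bar> = 1"
  shows "degree A = 0 \<or> degree B = 0"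
proof (rule eisenstein_criterion[of "int p"])
  show prime: "prime (int p)" using p by simp
  have p0: "0 < p" using p prime_gt_0_nat by blast
  have "e \<noteq> 0" using e by auto
  then have deg: "degree (A * B) = p - 1"
    using AB p0 by (simp add: degree_pcompose degree_geom_poly)
  have coeff: "coeff (A * B) j = e * int (p choose Suc j)" for j
    using AB by (simp add: coeff_geom_poly_shift)
  show "int p dvd coeff (A * B) j" if "j < degree (A * B)" for j
  proof -
    have "Suc j < p" using that deg by simp
    then have "p dvd (p choose Suc j)" using dvd_choose_prime[of "Suc j" p] p p0 by simp
    then show ?thesis unfolding coeff by simp
  qed
  have not_unit: "\<not> int p dvd e"
    using e prime not_prime_unit[of "int p"] by (auto simp: abs_if split: if_splits)
  show "\<not> (int p)\<^sup>2 dvd coeff (A * B) 0"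
    using not_unit p0 by (simp add: coeff power2_eq_square)
  show "\<not> int p dvd lead_coeff (A * B)"
    using not_unit coeff[of "p - 1"] deg p0 by simp
qed

text \<open>For prime \<open>p\<close>, \<open>geom_poly p\<close> is the cyclotomic polynomial \<open>\<Phi>\<^sub>p\<close>; this is its irreducibility
  over \<open>\<int>\<close>, with Gauss's lemma moving the scalar \<open>c\<close> into \<open>s\<close>.\<close>
lemma geom_poly_prime_factor_const:
  fixes r s :: "int poly"
  assumes p: "prime p" and r: "content r = 1" and c: "c \<noteq> 0" and rs: "smult c (geom_poly p) = r * s"
  shows "degree r = 0 \<or> degree s = 0"
proof -
  have p0: "0 < p" using p prime_gt_0_nat by blast
  have "content s = \<bar>c\<bar>"
    using arg_cong[OF rs, of content] r content_geom_poly[OF p0] by (simp add: content_mult)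
  then have s: "s = smult \<bar>c\<bar> (primitive_part s)"
    by (metis content_times_primitive_part)
  have "smult \<bar>c\<bar> (r * primitive_part s) = smult \<bar>c\<bar> (smult (sgn c) (geom_poly p))"
    by (metis abs_mult_sgn mult_smult_right rs s smult_smult)
  then have "r * primitive_part s = smult (sgn c) (geom_poly p)"
    using c smult_cancel[of "\<bar>c\<bar>"] by simp
  then have "pcompose r [:1, 1:] * pcompose (primitive_part s) [:1, 1:] =
      smult (sgn c) (pcompose (geom_poly p) [:1, 1:])"
    by (simp add: pcompose_mult[symmetric] pcompose_smult)
  then have "degree (pcompose r [:1, 1:]) = 0 \<or> degree (pcompose (primitive_part s) [:1, 1:]) = 0"
    by (rule geom_poly_shift_factor_const[OF p]) (use c in \<open>simp add: abs_sgn_eq\<close>)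
  then show ?thesis by (simp add: degree_pcompose)
qed

text \<open>Take \<open>r\<close> of least degree: the remainder of the pseudo-division of \<open>h\<close> by \<open>r\<close> vanishes at
  \<open>z\<close> and is therefore zero.\<close>
lemma primitive_minimal_poly_exists:
  fixes z :: complex and g :: "int poly"
  assumes "g \<noteq> 0" "poly (cpoly g) z = 0"
  obtains r where "r \<noteq> 0" "content r = 1" "poly (cpoly r) z = 0"
    and "\<And>h. poly (cpoly h) z = 0 \<Longrightarrow> \<exists>c s. c \<noteq> 0 \<and> smult c h = r * s"
proof -
  define S where "S = {r::int poly. r \<noteq> 0 \<and> poly (cpoly r) z = 0}"
  define d where "d = (LEAST d. \<exists>r\<in>S. degree r = d)"
  have "\<exists>r\<in>S. degree r = d"
    unfolding d_def by (rule LeastI_ex) (use assms in \<open>auto simp: S_def\<close>)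
  then obtain r0 where r0: "r0 \<in> S" "degree r0 = d" by blast
  have minimal: "\<And>r. r \<in> S \<Longrightarrow> d \<le> degree r" unfolding d_def by (rule Least_le) blast
  define r where "r = primitive_part r0"
  have r0_eq: "r0 = smult (content r0) r" unfolding r_def by simp
  have "r0 \<noteq> 0" using r0 by (simp add: S_def)
  then have r: "r \<noteq> 0" "content r = 1" "degree r = d" "content r0 \<noteq> 0"
    using r0 by (simp_all add: r_def)
  have root: "poly (cpoly r) z = 0"
    using r0 r(4) arg_cong[OF r0_eq, of "\<lambda>P. poly (cpoly P) z"] by (auto simp: S_def poly_cpoly_smult)
  have "\<exists>c s. c \<noteq> 0 \<and> smult c h = r * s" if h: "poly (cpoly h) z = 0" for h
  proof -
    obtain s t where st: "pseudo_divmod h r = (s, t)" by (cases "pseudo_divmod h r")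
    define c where "c = coeff r (degree r) ^ (Suc (degree h) - degree r)"
    have div: "smult c h = r * s + t" unfolding c_def by (rule pseudo_divmod(1)[OF r(1) st])
    have c: "c \<noteq> 0" unfolding c_def using r(1) by simp
    have "poly (cpoly t) z = 0"
      using arg_cong[OF div, of "\<lambda>P. poly (cpoly P) z"] h root
      by (simp add: poly_cpoly_smult map_poly_of_int_add poly_cpoly_mult)
    have "t = 0"
    proof (rule ccontr)
      assume "t \<noteq> 0"
      then have "t \<in> S" "degree t < d"
        using \<open>poly (cpoly t) z = 0\<close> pseudo_divmod(2)[OF r(1) st] r(3) by (auto simp: S_def)
      then show False using minimal[of t] by simp
    qed
    then show ?thesis using div c by auto
  qed
  with that r root show ?thesis by blast
qed

theorem int_poly_root_of_unity_conjugate: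
  fixes p :: nat and g :: "int poly" and z w :: complex
  assumes p: "prime p" and z: "z ^ p = 1" "z \<noteq> 1" and w: "w ^ p = 1" "w \<noteq> 1"
    and gz: "poly (cpoly g) z = 0"
  shows "poly (cpoly g) w = 0"
proof -
  have p0: "0 < p" using p prime_gt_0_nat by blast
  obtain r where r: "r \<noteq> 0" "content r = 1" "poly (cpoly r) z = 0"
    and divides: "\<And>h. poly (cpoly h) z = 0 \<Longrightarrow> \<exists>c s. c \<noteq> 0 \<and> smult c h = r * s"
    using primitive_minimal_poly_exists[OF geom_poly_neq_0[OF p0] poly_geom_poly_root_of_unity[OF z]]
    by blast
  obtain c s where c: "c \<noteq> 0" and cs: "smult c (geom_poly p) = r * s"
    using divides[OF poly_geom_poly_root_of_unity[OF z]] by blast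
  have "degree r \<noteq> 0" using degree_neq_0_if_root r by blast
  then have "degree s = 0" using geom_poly_prime_factor_const[OF p r(2) c cs] by simp
  then obtain s0 where s0: "s = [:s0:]" using degree0_coeffs by blast
  have "s0 \<noteq> 0" using cs s0 c geom_poly_neq_0[OF p0] by auto
  moreover have "of_int s0 * poly (cpoly r) w = 0"
    using arg_cong[OF cs, of "\<lambda>P. poly (cpoly P) w"] poly_geom_poly_root_of_unity[OF w] s0
    by (simp add: poly_cpoly_smult poly_cpoly_mult)
  ultimately have rw: "poly (cpoly r) w = 0" by simp
  obtain c' s' where c': "c' \<noteq> 0" and gs: "smult c' g = r * s'" using divides[OF gz] by blast
  have "of_int c' * poly (cpoly g) w = poly (cpoly r) w * poly (cpoly s') w"
    using arg_cong[OF gs, of "\<lambda>P. poly (cpoly P) w"] by (simp add: poly_cpoly_smult poly_cpoly_mult)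
  then show ?thesis using c' rw by simp
qed

section \<open>Orders at the roots of \<open>U\<^sub>N\<close>\<close>

lemma poly_cpoly_cnj: "poly (cpoly g) (cnj z) = cnj (poly (cpoly g) z)"
proof -
  have "map_poly cnj (cpoly g) = cpoly g" by (rule poly_eqI) (simp add: coeff_map_poly)
  then show ?thesis using poly_cnj[of "cpoly g" z] by simp
qed

lemma poly_cpoly_reflect: "poly (cpoly (pcompose g [:0, -1:])) z = poly (cpoly g) (- z)"
  by (simp add: cpoly_pcompose poly_pcompose cpoly_pCons)

lemma order_eq_if_pow_eq_minus_1:
  fixes x y :: complex
  assumes N: "prime N" "odd N" and x: "x ^ N = -1" "x \<noteq> -1" and y: "y ^ N = -1" "y \<noteq> -1"
  shows "order x (cpoly P) = order y (cpoly P)"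
proof (rule order_eq_if_same_int_roots)
  have minus: "(- u) ^ N = 1" "- u \<noteq> 1" if "u ^ N = -1" "u \<noteq> -1" for u :: complex
    using that power_minus_odd[OF N(2), of u] by (simp_all add: minus_equation_iff)
  fix g
  show "poly (cpoly g) x = 0 \<longleftrightarrow> poly (cpoly g) y = 0"
    using int_poly_root_of_unity_conjugate[OF N(1) minus[OF x] minus[OF y], of "pcompose g [:0, -1:]"]
      int_poly_root_of_unity_conjugate[OF N(1) minus[OF y] minus[OF x], of "pcompose g [:0, -1:]"]
    by (auto simp: poly_cpoly_reflect)
qed

text \<open>The roots of \<open>U\<^sub>N\<close> are the \<open>2N\<close>-th roots of unity other than \<open>\<plusminus>1\<close>. For \<open>N = 2\<close> these
  are \<open>\<plusminus>\<i>\<close>, exchanged by complex conjugation; for odd \<open>N\<close> they are \<open>\<plusminus>\<zeta>\<close> with \<open>\<zeta>\<^sup>N = -1\<close>, and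
  the sign does not matter for an even polynomial.\<close>
lemma order_at_roots_of_U_eq:
  fixes N :: nat and \<omega> \<zeta> :: complex and P :: "int poly"
  assumes N: "prime N" and \<omega>: "\<omega> ^ N = -1" "\<omega> ^ 2 \<noteq> 1"
    and even: "odd N \<Longrightarrow> (\<forall>j. coeff P j \<noteq> 0 \<longrightarrow> even j)"
    and \<zeta>: "\<zeta> ^ (2 * N) = 1" "\<zeta> ^ 2 \<noteq> 1"
  shows "order \<zeta> (cpoly P) = order \<omega> (cpoly P)"
proof (cases "N = 2")
  case True
  then have "\<zeta> ^ 2 = \<i> ^ 2" "\<omega> ^ 2 = \<i> ^ 2"
    using \<zeta> \<omega> power2_eq_1_iff[of "\<zeta> ^ 2"] by (simp_all add: power_mult[symmetric])
  then have "\<zeta> = \<i> \<or> \<zeta> = - \<i>" "\<omega> = \<i> \<or> \<omega> = - \<i>" by (simp_all only: power2_eq_iff)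
  then have "\<zeta> = \<omega> \<or> \<zeta> = cnj \<omega>" by auto
  moreover have "order (cnj \<omega>) (cpoly P) = order \<omega> (cpoly P)"
    by (rule order_eq_if_same_int_roots) (simp add: poly_cpoly_cnj)
  ultimately show ?thesis by auto
next
  case False
  then have odd: "odd N" using N prime_odd_nat prime_ge_2_nat[OF N] by simp
  have \<omega>': "\<omega> \<noteq> -1" using \<omega> by auto
  have "(\<zeta> ^ N) ^ 2 = 1" using \<zeta> by (simp add: power_mult[symmetric] mult.commute)
  then consider "\<zeta> ^ N = -1" | "\<zeta> ^ N = 1" by (auto simp: power2_eq_1_iff)
  then show ?thesis
  proof cases
    case 1
    have "\<zeta> \<noteq> -1" using \<zeta>(2) by auto
    then show ?thesis using order_eq_if_pow_eq_minus_1[OF N odd 1 _ \<omega>(1) \<omega>'] by blast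
  next
    case 2
    have "pcompose (cpoly P) [:0, -1:] = cpoly P"
      by (rule pcompose_reflect_if_even_coeffs) (use even odd in auto)
    then have "order \<zeta> (cpoly P) = order (- \<zeta>) (cpoly P)" by (rule order_uminus_eq_if_even[symmetric])
    also have "\<dots> = order \<omega> (cpoly P)"
    proof (rule order_eq_if_pow_eq_minus_1[OF N odd _ _ \<omega>(1) \<omega>'])
      show "(- \<zeta>) ^ N = -1" using 2 power_minus_odd[OF odd, of \<zeta>] by simp
      show "- \<zeta> \<noteq> -1" using \<zeta>(2) by auto
    qed
    finally show ?thesis .
  qed
qed

section \<open>Extracting the maximal power of \<open>U\<^sub>N\<close>\<close>

lemma coeff_U_poly: "coeff (U_poly N) i = (if even i \<and> i < 2 * N then 1 else 0)"
proof -
  have "coeff (U_poly N) i = (\<Sum>j<N. if j = i div 2 then (if even i then 1 else 0) else 0)"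
    unfolding U_poly_def coeff_sum by (rule sum.cong) (auto simp: coeff_monom)
  then show ?thesis by auto
qed

lemma degree_U_poly: "0 < N \<Longrightarrow> degree (U_poly N) = 2 * N - 2"
  by (intro antisym degree_le le_degree) (auto simp: coeff_U_poly)

lemma lead_coeff_U_poly: "0 < N \<Longrightarrow> lead_coeff (U_poly N) = 1"
  by (simp add: degree_U_poly coeff_U_poly)

lemma poly_U_poly_root:
  fixes z :: complex
  assumes "z ^ (2 * N) = 1" "z ^ 2 \<noteq> 1"
  shows "poly (cpoly (U_poly N)) z = 0"
proof -
  have "poly (cpoly (U_poly N)) z = (\<Sum>j<N. (z ^ 2) ^ j)"
    unfolding U_poly_def by (simp add: map_poly_monom poly_monom poly_sum power_mult map_poly_of_int_sum)
  also have "\<dots> = ((z ^ 2) ^ N - 1) / (z ^ 2 - 1)" by (rule geometric_sum) (use assms in auto)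
  also have "\<dots> = 0" using assms by (simp add: power_mult[symmetric])
  finally show ?thesis .
qed

lemma prod_linear_powers_dvd:
  fixes q :: "'a::field_gcd poly"
  assumes "finite A" "\<And>z. z \<in> A \<Longrightarrow> [:-z, 1:] ^ n dvd q"
  shows "(\<Prod>z\<in>A. [:-z, 1:] ^ n) dvd q"
  using assms
proof (induction A rule: finite_induct)
  case (insert x F)
  have "coprime [:-x, 1:] [:-z, 1:]" if "z \<in> F" for z
  proof (rule coprimeI)
    have "x \<noteq> z" using insert that by auto
    then have unit: "is_unit [:z - x:]" by (simp add: is_unit_const_poly_iff dvd_field_iff)
    fix c assume "c dvd [:-x, 1:]" "c dvd [:-z, 1:]"
    then have "c dvd [:z - x:]" using dvd_diff[of c "[:-x, 1:]" "[:-z, 1:]"] by simp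
    then show "is_unit c" using unit by (rule dvd_unit_imp_unit)
  qed
  then have "coprime ([:-x, 1:] ^ n) (\<Prod>z\<in>F. [:-z, 1:] ^ n)"
    using prod_coprime_right[of F "[:-x, 1:] ^ n" "\<lambda>z. [:-z, 1:] ^ n"] by (simp add: coprime_power_left_iff coprime_power_right_iff)
  then show ?case using insert by (simp add: divides_mult)
qed simp

text \<open>All \<open>2N - 2\<close> roots of the monic polynomial \<open>U_poly N\<close> having the same order \<open>\<nu>\<close> in \<open>P\<close>,
  the power \<open>U_poly N ^ \<nu>\<close> divides \<open>P\<close> over \<open>\<complex>\<close>, hence over \<open>\<int>\<close>.\<close>
lemma U_poly_power_dvd:
  fixes P :: "int poly"
  assumes N: "0 < N" and P: "P \<noteq> 0"
    and orders: "\<And>z. z ^ (2 * N) = 1 \<Longrightarrow> z ^ 2 \<noteq> 1 \<Longrightarrow> order z (cpoly P) = \<nu>"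
  shows "U_poly N ^ \<nu> dvd P"
proof -
  define Z where "Z = {z::complex. z ^ (2 * N) = 1} - {1, -1}"
  have roots_unity: "finite {z::complex. z ^ (2 * N) = 1}" "card {z::complex. z ^ (2 * N) = 1} = 2 * N"
    using N by (simp_all add: finite_roots_unity card_roots_unity_eq)
  then have Z: "finite Z" "card Z = 2 * N - 2" unfolding Z_def by (simp_all add: card_Diff_subset)
  have inZ: "z ^ (2 * N) = 1" "z ^ 2 \<noteq> 1" if "z \<in> Z" for z
    using that unfolding Z_def by (auto simp: power2_eq_1_iff)
  define L where "L = (\<Prod>z\<in>Z. [:-z, 1:] ^ \<nu>)"
  have "L dvd cpoly P" unfolding L_def
    by (rule prod_linear_powers_dvd[OF Z(1)]) (use orders inZ P in \<open>simp add: order_divides\<close>)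
  moreover have "L dvd cpoly (U_poly N ^ \<nu>)" unfolding L_def map_poly_of_int_power
    by (rule prod_linear_powers_dvd[OF Z(1)])
       (use poly_U_poly_root inZ in \<open>simp add: poly_eq_0_iff_dvd dvd_power_same\<close>)
  moreover have "U_poly N \<noteq> 0" using lead_coeff_U_poly[OF N] by auto
  then have deg: "degree (U_poly N ^ \<nu>) = degree L"
    using Z N unfolding L_def
    by (auto simp: degree_power_eq degree_U_poly degree_prod_eq_sum_degree degree_linear_power)
  moreover have monic: "lead_coeff (U_poly N ^ \<nu>) = 1" "U_poly N ^ \<nu> \<noteq> 0"
    using lead_coeff_U_poly[OF N] by (auto simp: lead_coeff_power)
  obtain R T where div: "pseudo_divmod P (U_poly N ^ \<nu>) = (R, T)" by fastforce
  have P_eq: "P = U_poly N ^ \<nu> * R + T"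
    using pseudo_divmod(1)[OF monic(2) div] monic(1) by simp
  have "T = 0"
  proof (rule ccontr)
    assume "T \<noteq> 0"
    have "cpoly T = cpoly P - cpoly (U_poly N ^ \<nu>) * cpoly R"
      using P_eq by (simp add: map_poly_of_int_add map_poly_of_int_mult)
    with calculation(1,2) have "L dvd cpoly T" by (simp add: dvd_diff)
    then have "degree L \<le> degree T" using \<open>T \<noteq> 0\<close> by (metis cpoly_eq_0_iff degree_cpoly dvd_imp_degree_le)
    then show False using pseudo_divmod(2)[OF monic(2) div] \<open>T \<noteq> 0\<close> deg by simp
  qed
  then show ?thesis using P_eq by simp
qed

lemma exp_pi_root_of_unity:
  fixes N k :: nat
  assumes N: "prime N" and k: "coprime k (2 * N)"
  defines "\<omega> \<equiv> exp (\<i> * of_real pi * of_nat k / of_nat N)"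
  shows "\<omega> ^ N = -1" and "\<omega> ^ 2 \<noteq> 1" and "\<omega> ^ (2 * N) = 1"
proof -
  have N0: "N \<noteq> 0" using N by auto
  have "odd k" using k by auto
  have "\<omega> ^ N = exp (of_nat k * (\<i> * of_real pi))"
    unfolding \<omega>_def exp_of_nat_mult[symmetric] using N0 by (simp add: field_simps)
  also have "\<dots> = -1" using \<open>odd k\<close> by (simp add: exp_of_nat_mult)
  finally show "\<omega> ^ N = -1" .
  then show "\<omega> ^ (2 * N) = 1" by (simp add: mult.commute[of 2 N] power_mult)
  show "\<omega> ^ 2 \<noteq> 1"
  proof
    assume "\<omega> ^ 2 = 1"
    moreover have "\<omega> ^ 2 = exp (\<i> * of_real (2 * pi * k / N))"
      unfolding \<omega>_def exp_of_nat_mult[symmetric] by (simp add: field_simps)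
    ultimately have "cos (2 * pi * k / N) = 1"
      using Re_exp[of "\<i> * of_real (2 * pi * k / N)"] by simp
    then obtain n :: int where "2 * pi * k / N = of_int n * 2 * pi" using cos_one_2pi_int by blast
    then have "real k = real_of_int n * N" using N0 by (simp add: field_simps)
    then have "int k = n * int N" by (metis of_int_eq_iff of_int_mult of_int_of_nat_eq)
    then have "N dvd k" by (metis dvd_triv_right int_dvd_int_iff)
    moreover have "coprime k N" using k by simp
    ultimately have "is_unit N" by (metis coprime_common_divisor dvd_refl)
    then show False using N by simp
  qed
qed

lemma root_if_U_dvd:
  fixes z :: complex
  assumes dvd: "U N dvd qpow e * lpoly_of_poly R" and z: "poly (cpoly (U_poly N)) z = 0" "z \<noteq> 0"
  shows "poly (cpoly R) z = 0"
proof -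
  obtain h where "qpow e * lpoly_of_poly R = U N * h" using dvd by (rule dvdE)
  moreover obtain a H where "h = qpow a * lpoly_of_poly H" by (rule lpoly_poly_repr)
  ultimately have "qpow e * lpoly_of_poly R = qpow (1 - int N + a) * lpoly_of_poly (U_poly N * H)"
    unfolding U_eq_U_poly by (simp add: lpoly_of_poly_mult qpow_mult[symmetric] ac_simps)
  then consider s where "monom 1 s * R = U_poly N * H" | s where "R = monom 1 s * (U_poly N * H)"
    using qpow_mult_lpoly_of_poly_eq by blast
  then show ?thesis
  proof cases
    case (1 s)
    then have "poly (cpoly (monom 1 s * R)) z = poly (cpoly (U_poly N * H)) z" by simp
    then have "z ^ s * poly (cpoly R) z = 0" using z(1) by (simp add: poly_cpoly_mult map_poly_monom poly_monom)
    then show ?thesis using z(2) by simp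
  next
    case (2 s)
    then have "poly (cpoly R) z = poly (cpoly (monom 1 s * (U_poly N * H))) z" by simp
    then show ?thesis using z(1) by (simp add: poly_cpoly_mult map_poly_monom poly_monom)
  qed
qed

lemma cofactor_not_root:
  fixes P R :: "int poly" and z :: complex
  assumes P: "P = U_poly N ^ \<nu> * R" "P \<noteq> 0" and order: "order z (cpoly P) = \<nu>"
    and root: "poly (cpoly (U_poly N)) z = 0"
  shows "poly (cpoly R) z \<noteq> 0"
proof
  assume "poly (cpoly R) z = 0"
  then have "[:-z, 1:] ^ \<nu> * [:-z, 1:] dvd cpoly (U_poly N) ^ \<nu> * cpoly R"
    using root by (intro mult_dvd_mono dvd_power_same) (simp_all add: poly_eq_0_iff_dvd)
  then have "[:-z, 1:] ^ Suc \<nu> dvd cpoly P"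
    using P(1) by (simp only: power_Suc2 map_poly_of_int_mult map_poly_of_int_power)
  then have "cpoly P = 0 \<or> Suc \<nu> \<le> order z (cpoly P)" by (simp only: order_divides)
  then show False using order P(2) by simp
qed

lemma maximal_U_power_factor:
  fixes P :: "int poly" and \<omega> :: complex
  assumes f: "f = qpow m * lpoly_of_poly P" and "0 < N" "P \<noteq> 0"
    and orders: "\<And>z. z ^ (2 * N) = 1 \<Longrightarrow> z ^ 2 \<noteq> 1 \<Longrightarrow> order z (cpoly P) = \<nu>"
    and \<omega>: "\<omega> ^ (2 * N) = 1" "\<omega> ^ 2 \<noteq> 1"
  shows "\<exists>Vt. f = U N ^ \<nu> * Vt \<and> \<not> U N dvd Vt"
proof -
  obtain R where P_eq: "P = U_poly N ^ \<nu> * R" using U_poly_power_dvd[OF \<open>0 < N\<close> \<open>P \<noteq> 0\<close> orders] by blast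
  define Vt where "Vt = qpow (m + int \<nu> * (int N - 1)) * lpoly_of_poly R"
  have "f = U N ^ \<nu> * Vt" unfolding Vt_def U_power_mult f P_eq ..
  moreover have "\<not> U N dvd Vt"
  proof
    have root: "poly (cpoly (U_poly N)) \<omega> = 0" using poly_U_poly_root \<omega> by blast
    have "\<omega> \<noteq> 0" using \<omega> \<open>0 < N\<close> by (auto simp: power_0_left)
    assume "U N dvd Vt"
    then have "poly (cpoly R) \<omega> = 0" unfolding Vt_def using root \<open>\<omega> \<noteq> 0\<close> by (rule root_if_U_dvd)
    then show False using cofactor_not_root[OF P_eq \<open>P \<noteq> 0\<close> orders[OF \<omega>] root] by blast
  qed
  ultimately show ?thesis by blast
qed

theorem proposition2p5:
  fixes N k n :: nat and V :: "nat \<Rightarrow> braid \<Rightarrow> lpoly" and w :: braid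
  assumes "prime N"
    and "0 < k" and "k < 2 * N" and "coprime k (2 * N)"
    and "is_V N V"
    and "1 \<le> n" and "braid_word n w"
  shows "\<exists>Vt :: lpoly.
           V n w = U N ^ root_mult (V n w) (exp (\<i> * of_real pi * of_nat k / of_nat N)) * Vt
           \<and> \<not> U N dvd Vt"
proof -
  define \<omega> where "\<omega> = exp (\<i> * of_real pi * of_nat k / of_nat N)"
  note \<omega> = exp_pi_root_of_unity[OF \<open>prime N\<close> \<open>coprime k (2 * N)\<close>, folded \<omega>_def]
  have N: "0 < N" using \<open>prime N\<close> prime_gt_0_nat by blast
  have "V n w \<noteq> 0" using V_neq_0 assms N by blast
  then obtain m P where lp: "lp_to_poly (V n w) = cpoly P" and V_eq: "V n w = qpow m * lpoly_of_poly P"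
    and P0: "coeff P 0 \<noteq> 0"
    by (rule lp_to_poly_normal_form)
  have even: "\<forall>j. coeff P j \<noteq> 0 \<longrightarrow> even j" if "odd N"
    using V_even_exponents[OF \<open>is_V N V\<close> that \<open>1 \<le> n\<close> \<open>braid_word n w\<close>] even_exponent_if_exponents_parity P0
    unfolding V_eq by blast
  have "order z (cpoly P) = root_mult (V n w) \<omega>" if "z ^ (2 * N) = 1" "z ^ 2 \<noteq> 1" for z
    using order_at_roots_of_U_eq[OF \<open>prime N\<close> \<omega>(1,2) even that] lp by (simp add: root_mult_def)
  with maximal_U_power_factor[OF V_eq N] P0 \<omega>(2,3) show ?thesis
    unfolding \<omega>_def by fastforce
qed

end
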